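(* Every finite ordinal potential game has at least one strongly maximal equilibrium.
   Context: A finite strategic-form game $\Gamma=(I,(S_i)_{i\in I},(u_i)_{i\in I})$ has finite player set $I$, finite nonempty strategy sets $S_i$, utilities $u_i:S\to\mathbb{R}$, $S=\prod_i S_i$; $(s_i',s_{-i})$ denotes $s$ with player $i$'s strategy replaced by $s_i'$. A pure Nash equilibrium is $s\in S$ with $u_i(s)\ge u_i(s_i',s_{-i})$ for all $i$ and $s_i'\in S_i$. A function $P:S\to\mathbb{R}$ is an ordinal potential if for all $i$, $a,b\in S_i$, $\sigma_{-i}\in S_{-i}$: $u_i(a,\sigma_{-i})>u_i(b,\sigma_{-i})\iff P(a,\sigma_{-i})>P(b,\sigma_{-i})$; $\Gamma$ is an ordinal potential game if one exists. The ordinal deployment graph of $\Gamma$ has vertex set $S$ and an arc $(s,s')$, $s'\neq s$, iff $s'=(s_i',s_{-i})$ for some $i$ with $u_i(s')\ge u_i(s)$. Define $s\succeq s'$ iff there is a directed path (possibly of length $0$) in this graph from $s'$ to $s$, and $s\succ s'$ iff $s\succeq s'$ and not $s'\succeq s$. A strongly maximal state is an $s^*$ with no $s$ satisfying $s\succ s^*$. Two states communicate if each is reachable from the other by a directed path. A strongly maximal equilibrium is a strongly maximal state $s$ such that every state communicating with $s$ (including $s$) is a pure Nash equilibrium. *)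

theory Defs
  imports Complex_Main "HOL-Library.FuncSet"
begin

definition profiles :: "'i set \<Rightarrow> ('i \<Rightarrow> 's set) \<Rightarrow> ('i \<Rightarrow> 's) set" where
  "profiles I S = PiE I S"

definition finite_game :: "'i set \<Rightarrow> ('i \<Rightarrow> 's set) \<Rightarrow> bool" where
  "finite_game I S \<longleftrightarrow> finite I \<and> (\<forall>i\<in>I. finite (S i) \<and> S i \<noteq> {})"

definition is_ordinal_potential ::
  "'i set \<Rightarrow> ('i \<Rightarrow> 's set) \<Rightarrow> ('i \<Rightarrow> ('i \<Rightarrow> 's) \<Rightarrow> real) \<Rightarrow> (('i \<Rightarrow> 's) \<Rightarrow> real) \<Rightarrow> bool" where
  "is_ordinal_potential I S u P \<longleftrightarrow>
     (\<forall>i\<in>I. \<forall>a\<in>S i. \<forall>b\<in>S i. \<forall>\<sigma>\<in>profiles I S.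
        u i (\<sigma>(i := a)) > u i (\<sigma>(i := b)) \<longleftrightarrow> P (\<sigma>(i := a)) > P (\<sigma>(i := b)))"

definition ordinal_potential_game ::
  "'i set \<Rightarrow> ('i \<Rightarrow> 's set) \<Rightarrow> ('i \<Rightarrow> ('i \<Rightarrow> 's) \<Rightarrow> real) \<Rightarrow> bool" where
  "ordinal_potential_game I S u \<longleftrightarrow> (\<exists>P. is_ordinal_potential I S u P)"

definition odg_arc ::
  "'i set \<Rightarrow> ('i \<Rightarrow> 's set) \<Rightarrow> ('i \<Rightarrow> ('i \<Rightarrow> 's) \<Rightarrow> real) \<Rightarrow> ('i \<Rightarrow> 's) \<Rightarrow> ('i \<Rightarrow> 's) \<Rightarrow> bool" where
  "odg_arc I S u s s' \<longleftrightarrow> s \<in> profiles I S \<and> s' \<noteq> s \<and>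
     (\<exists>i\<in>I. \<exists>a\<in>S i. s' = s(i := a) \<and> u i s' \<ge> u i s)"

definition reach ::
  "'i set \<Rightarrow> ('i \<Rightarrow> 's set) \<Rightarrow> ('i \<Rightarrow> ('i \<Rightarrow> 's) \<Rightarrow> real) \<Rightarrow> ('i \<Rightarrow> 's) \<Rightarrow> ('i \<Rightarrow> 's) \<Rightarrow> bool" where
  "reach I S u = (odg_arc I S u)\<^sup>*\<^sup>*"

definition weakly_dominates where
  "weakly_dominates I S u s s' \<longleftrightarrow> reach I S u s' s"

definition strictly_dominates where
  "strictly_dominates I S u s s' \<longleftrightarrow> weakly_dominates I S u s s' \<and> \<not> weakly_dominates I S u s' s"

definition strongly_maximal where
  "strongly_maximal I S u s\<^sub>0 \<longleftrightarrow> s\<^sub>0 \<in> profiles I S \<and>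
     \<not> (\<exists>s\<in>profiles I S. strictly_dominates I S u s s\<^sub>0)"

definition communicate where
  "communicate I S u s t \<longleftrightarrow> reach I S u s t \<and> reach I S u t s"

definition pure_nash ::
  "'i set \<Rightarrow> ('i \<Rightarrow> 's set) \<Rightarrow> ('i \<Rightarrow> ('i \<Rightarrow> 's) \<Rightarrow> real) \<Rightarrow> ('i \<Rightarrow> 's) \<Rightarrow> bool" where
  "pure_nash I S u s \<longleftrightarrow> s \<in> profiles I S \<and> (\<forall>i\<in>I. \<forall>a\<in>S i. u i s \<ge> u i (s(i := a)))"

definition strongly_maximal_equilibrium where
  "strongly_maximal_equilibrium I S u s \<longleftrightarrow> strongly_maximal I S u s \<and>
     (\<forall>t\<in>profiles I S. communicate I S u s t \<longrightarrow> pure_nash I S u t)"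

end

theory Submission
  imports Defs
begin

text \<open>In a finite digraph, a vertex whose set of reachable vertices has minimal
  cardinality lies in a terminal strongly connected class: every vertex it reaches reaches
  it back. Such a vertex is strongly maximal, and so is every vertex communicating with it.
  In an ordinal potential game the potential never decreases along arcs, so it is constant
  on a terminal class; an improving deviation from a state of that class would be an arc
  that strictly raises the potential and still leads back into the class, which is
  impossible. Hence every state of the class is a pure Nash equilibrium.\<close>

lemma finite_closed_set_has_essential_vertex:
  fixes r :: "'a \<Rightarrow> 'a \<Rightarrow> bool"
  assumes fin: "finite A" and a: "a \<in> A" and closed: "\<And>x y. x \<in> A \<Longrightarrow> r x y \<Longrightarrow> y \<in> A"
  shows "\<exists>s\<in>A. \<forall>t. r\<^sup>*\<^sup>* s t \<longrightarrow> r\<^sup>*\<^sup>* t s"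
proof -
  define R where "R x = {y. r\<^sup>*\<^sup>* x y}" for x
  have R_sub: "R x \<subseteq> A" if "x \<in> A" for x
  proof
    fix y assume "y \<in> R x"
    then have "r\<^sup>*\<^sup>* x y" by (simp add: R_def)
    then show "y \<in> A" using that by induction (auto intro: closed)
  qed
  obtain s where s: "s \<in> A" and min: "\<And>x. x \<in> A \<Longrightarrow> card (R s) \<le> card (R x)"
    using ex_has_least_nat[of "\<lambda>x. x \<in> A" a "\<lambda>x. card (R x)"] a by blast
  have "r\<^sup>*\<^sup>* t s" if st: "r\<^sup>*\<^sup>* s t" for t
  proof -
    have "R t \<subseteq> R s" using st by (auto simp: R_def)
    moreover have "card (R s) \<le> card (R t)"
      using min R_sub[OF s] st by (auto simp: R_def)
    ultimately have "R t = R s"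
      using card_seteq fin R_sub[OF s] finite_subset by metis
    moreover have "s \<in> R s" by (simp add: R_def)
    ultimately have "s \<in> R t" by simp
    then show ?thesis by (simp add: R_def)
  qed
  with s show ?thesis by blast
qed

lemma profiles_update:
  "s \<in> profiles I S \<Longrightarrow> i \<in> I \<Longrightarrow> a \<in> S i \<Longrightarrow> s(i := a) \<in> profiles I S"
  by (auto simp: profiles_def PiE_iff extensional_def)

lemma finite_profiles: "finite_game I S \<Longrightarrow> finite (profiles I S)"
  by (auto simp: finite_game_def profiles_def intro: finite_PiE)

lemma profiles_nonempty: "finite_game I S \<Longrightarrow> profiles I S \<noteq> {}"
  by (auto simp: finite_game_def profiles_def PiE_eq_empty_iff)

lemma ordinal_potential_deviation_less_iff:
  assumes "is_ordinal_potential I S u P" and "s \<in> profiles I S" and "i \<in> I" and "a \<in> S i"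
  shows "u i s < u i (s(i := a)) \<longleftrightarrow> P s < P (s(i := a))"
    and "u i (s(i := a)) < u i s \<longleftrightarrow> P (s(i := a)) < P s"
proof -
  have "s i \<in> S i" using assms(2,3) by (auto simp: profiles_def PiE_iff)
  with assms have "u i (s(i := b)) < u i (s(i := c)) \<longleftrightarrow> P (s(i := b)) < P (s(i := c))"
    if "b \<in> {a, s i}" "c \<in> {a, s i}" for b c
    using that unfolding is_ordinal_potential_def by blast
  from this[of "s i" a] this[of a "s i"]
  show "u i s < u i (s(i := a)) \<longleftrightarrow> P s < P (s(i := a))"
    and "u i (s(i := a)) < u i s \<longleftrightarrow> P (s(i := a)) < P s" by simp_all
qed

lemma odg_arc_profiles: "odg_arc I S u s t \<Longrightarrow> t \<in> profiles I S"
  by (auto simp: odg_arc_def intro: profiles_update)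

lemma odg_arc_potential_mono:
  assumes pot: "is_ordinal_potential I S u P" and arc: "odg_arc I S u s t"
  shows "P s \<le> P t"
proof -
  obtain i a where s: "s \<in> profiles I S" and i: "i \<in> I" and a: "a \<in> S i"
    and t: "t = s(i := a)" and "u i s \<le> u i t"
    using arc unfolding odg_arc_def by blast
  then have "\<not> P (s(i := a)) < P s"
    using ordinal_potential_deviation_less_iff(2)[OF pot s i a] by simp
  then show ?thesis using t by simp
qed

lemma reach_potential_mono:
  assumes "is_ordinal_potential I S u P" and "reach I S u s t"
  shows "P s \<le> P t"
  using assms(2) unfolding reach_def
  by induction (auto dest: odg_arc_potential_mono[OF assms(1)])

lemma improving_deviation_is_arc:
  assumes "s \<in> profiles I S" and "i \<in> I" and "a \<in> S i" and "u i s < u i (s(i := a))"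
  shows "odg_arc I S u s (s(i := a))"
proof -
  have "s(i := a) \<noteq> s" using assms(4) by auto
  with assms show ?thesis unfolding odg_arc_def by fastforce
qed

definition essential where
  "essential I S u s \<longleftrightarrow> (\<forall>t. reach I S u s t \<longrightarrow> reach I S u t s)"

lemma essential_exists:
  assumes "finite_game I S"
  shows "\<exists>s\<in>profiles I S. essential I S u s"
proof -
  obtain a where "a \<in> profiles I S" using profiles_nonempty[OF assms] by blast
  from finite_closed_set_has_essential_vertex[OF finite_profiles[OF assms] this, of "odg_arc I S u"]
  show ?thesis unfolding essential_def reach_def using odg_arc_profiles by blast
qed

lemma essential_reach:
  assumes "essential I S u s" and "reach I S u s t"
  shows "essential I S u t"
  using assms unfolding essential_def reach_def by (meson rtranclp_trans)

lemma essential_strongly_maximal: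
  "s \<in> profiles I S \<Longrightarrow> essential I S u s \<Longrightarrow> strongly_maximal I S u s"
  by (auto simp: strongly_maximal_def strictly_dominates_def weakly_dominates_def essential_def)

lemma essential_pure_nash:
  assumes pot: "is_ordinal_potential I S u P"
    and s: "s \<in> profiles I S" and ess: "essential I S u s"
  shows "pure_nash I S u s"
proof -
  have "u i (s(i := a)) \<le> u i s" if i: "i \<in> I" and a: "a \<in> S i" for i a
  proof (rule ccontr)
    assume "\<not> ?thesis"
    then have improving: "u i s < u i (s(i := a))" by simp
    then have "P s < P (s(i := a))"
      using ordinal_potential_deviation_less_iff[OF pot s i a] by simp
    moreover have "odg_arc I S u s (s(i := a))"
      by (intro improving_deviation_is_arc s i a improving)
    then have "reach I S u s (s(i := a))" by (simp add: reach_def)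
    then have "P (s(i := a)) \<le> P s"
      using ess reach_potential_mono[OF pot] unfolding essential_def by blast
    ultimately show False by simp
  qed
  with s show ?thesis by (simp add: pure_nash_def)
qed

theorem corollary1:
  fixes I :: "'i set" and S :: "'i \<Rightarrow> 's set" and u :: "'i \<Rightarrow> ('i \<Rightarrow> 's) \<Rightarrow> real"
  assumes "finite_game I S"
    and "ordinal_potential_game I S u"
  shows "\<exists>s. strongly_maximal_equilibrium I S u s"
proof -
  obtain P where pot: "is_ordinal_potential I S u P"
    using assms(2) unfolding ordinal_potential_game_def by blast
  obtain s where s: "s \<in> profiles I S" and ess: "essential I S u s"
    using essential_exists[OF assms(1)] by blast
  have "pure_nash I S u t" if "t \<in> profiles I S" and "communicate I S u s t" for t
    using that essential_pure_nash[OF pot] essential_reach[OF ess]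
    unfolding communicate_def by blast
  with s ess show ?thesis
    unfolding strongly_maximal_equilibrium_def by (blast intro: essential_strongly_maximal)
qed

end
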